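(* Let $f:\mathbb{R}^{n\times n}\to\mathbb{R}$ be differentiable. Let $f^*=\min_{X\in\Pi_n} f(X)$ and $\underline{f}=\min_{X\in\mathcal{D}_n} f(X)$. Suppose $\sigma>\frac12(f^*-\underline{f})$. Then any global minimizer $X(\sigma)$ of \[ \min_{X\in\mathcal{D}_n}\ f(X)+\sigma\|X\|_0 \] is also a global minimizer of $\min_{X\in\Pi_n} f(X)$.
   Context: $\Pi_n=\{X\in\mathbb{R}^{n\times n}: X\mathbf{e}=X^{\mathsf T}\mathbf{e}=\mathbf{e},\ X_{ij}\in\{0,1\}\}$ is the set of $n\times n$ permutation matrices, $\mathcal{D}_n=\{X\in\mathbb{R}^{n\times n}: X\mathbf{e}=X^{\mathsf T}\mathbf{e}=\mathbf{e},\ X\ge 0\}$ is the set of doubly stochastic matrices (entrywise inequality), $\mathbf{e}$ is the all-ones vector, and $\|X\|_0$ is the number of nonzero entries of $X$. *)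

theory Defs
  imports "HOL-Analysis.Analysis"
begin

text \<open>n x n real matrices, with the index set given by a finite type 'n (n = CARD('n)).\<close>

definition perm_mats :: "(real^'n^'n) set" where
  "perm_mats = {X. (\<forall>i. (\<Sum>j\<in>UNIV. X$i$j) = 1) \<and> (\<forall>j. (\<Sum>i\<in>UNIV. X$i$j) = 1)
                   \<and> (\<forall>i j. X$i$j \<in> {0,1})}"

definition ds_mats :: "(real^'n^'n) set" where
  "ds_mats = {X. (\<forall>i. (\<Sum>j\<in>UNIV. X$i$j) = 1) \<and> (\<forall>j. (\<Sum>i\<in>UNIV. X$i$j) = 1)
                   \<and> (\<forall>i j. X$i$j \<ge> 0)}"

definition l0norm :: "real^'n^'n \<Rightarrow> nat" where
  "l0norm X = card {(i,j). X$i$j \<noteq> 0}"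

end

theory Submission
  imports Defs
begin

text \<open>
  Every row of a doubly stochastic matrix has at least one nonzero entry, and a row with
  exactly one nonzero entry carries a 1 that clears its whole column. Hence if all rows but
  one have a single nonzero entry, these entries occupy n - 1 distinct columns and the last
  row is forced into the remaining column; so a doubly stochastic matrix that is not a
  permutation has at least two rows with two or more nonzero entries, i.e.
  \<open>\<parallel>X\<parallel>\<^sub>0 \<ge> n + 2\<close>, whereas every permutation matrix has \<open>\<parallel>X\<parallel>\<^sub>0 = n\<close>.
  Comparing a non-permutation minimiser \<open>X(\<sigma>)\<close> with a permutation \<open>P\<close> attaining \<open>f\<^sup>*\<close>
  gives \<open>2\<sigma> \<le> f\<^sup>* - f(X(\<sigma>))\<close>, which is at most \<open>f\<^sup>*\<close> minus any lower bound of \<open>f\<close> on the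
  doubly stochastic matrices, contradicting the choice of \<open>\<sigma>\<close>. Among permutations the
  penalty is the constant \<open>\<sigma> n\<close>, so \<open>X(\<sigma>)\<close> minimises \<open>f\<close> there.
\<close>

definition row_support :: "real^'n^'n \<Rightarrow> 'n \<Rightarrow> 'n set" where
  "row_support X i = {j. X$i$j \<noteq> 0}"

lemma l0norm_eq_sum_card_row_support:
  "l0norm X = (\<Sum>i\<in>UNIV. card (row_support X i))"
proof -
  have "{(i,j). X$i$j \<noteq> 0} = Sigma UNIV (row_support X)"
    by (auto simp: row_support_def)
  then show ?thesis
    by (simp add: l0norm_def card_SigmaI)
qed

lemma sum_row_eq_sum_row_support:
  "(\<Sum>j\<in>UNIV. X$i$j) = (\<Sum>j\<in>row_support X i. X$i$j)"
  by (rule sum.mono_neutral_right) (auto simp: row_support_def)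

lemma mat_1_in_perm_mats: "mat 1 \<in> perm_mats"
  by (auto simp: perm_mats_def mat_def if_distrib sum.delta sum.delta')

lemma perm_mats_subset_ds_mats: "perm_mats \<subseteq> ds_mats"
  by (auto simp: perm_mats_def ds_mats_def) (metis order_refl zero_le_one)

lemma finite_perm_mats: "finite (perm_mats :: (real^'n^'n) set)"
proof -
  let ?A = "PiE (UNIV :: 'n set) (\<lambda>_. PiE (UNIV :: 'n set) (\<lambda>_. {0::real, 1}))"
  have "perm_mats \<subseteq> (\<lambda>g. \<chi> i j. g i j) ` ?A"
  proof
    fix X :: "real^'n^'n"
    assume "X \<in> perm_mats"
    show "X \<in> (\<lambda>g. \<chi> i j. g i j) ` ?A"
    proof (rule image_eqI)
      show "X = (\<chi> i j. X$i$j)"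
        by (simp add: vec_eq_iff)
      show "(\<lambda>i j. X$i$j) \<in> ?A"
        using \<open>X \<in> perm_mats\<close> by (auto simp: perm_mats_def PiE_iff)
    qed
  qed
  moreover have "finite ?A"
    by (intro finite_PiE) auto
  ultimately show ?thesis
    by (meson finite_surj)
qed

lemma compact_ds_mats: "compact ds_mats"
  unfolding compact_eq_bounded_closed
proof
  show "bounded (ds_mats :: (real^'n^'n) set)"
    unfolding bounded_iff
  proof (intro exI ballI)
    fix X :: "real^'n^'n"
    assume X: "X \<in> ds_mats"
    have "norm X \<le> (\<Sum>i\<in>UNIV. norm (X$i))"
      by (simp add: norm_vec_def L2_set_le_sum)
    also have "\<dots> \<le> (\<Sum>i\<in>(UNIV::'n set). \<Sum>j\<in>UNIV. norm (X$i$j))"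
      by (intro sum_mono) (simp add: norm_vec_def L2_set_le_sum)
    also have "\<dots> = (\<Sum>i\<in>(UNIV::'n set). 1)"
      using X by (auto simp: ds_mats_def intro!: sum.cong)
    finally show "norm X \<le> real CARD('n)"
      by simp
  qed
  show "closed (ds_mats :: (real^'n^'n) set)"
    unfolding ds_mats_def
    by (intro closed_Collect_conj closed_Collect_all closed_Collect_eq closed_Collect_le
        continuous_intros)
qed

lemma l0norm_perm_mats:
  fixes X :: "real^'n^'n"
  assumes "X \<in> perm_mats"
  shows "l0norm X = CARD('n)"
proof -
  have "card (row_support X i) = 1" for i
  proof -
    have "1 = (\<Sum>j\<in>row_support X i. X$i$j)"
      using assms sum_row_eq_sum_row_support[of X i] by (simp add: perm_mats_def)
    also have "\<dots> = (\<Sum>j\<in>row_support X i. 1)"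
      using assms by (intro sum.cong) (auto simp: perm_mats_def row_support_def)
    finally show ?thesis
      by simp
  qed
  then show ?thesis
    by (simp add: l0norm_eq_sum_card_row_support)
qed

lemma ds_mats_row_support_nonempty:
  assumes "X \<in> ds_mats"
  shows "row_support X i \<noteq> {}"
  using assms sum_row_eq_sum_row_support[of X i] by (auto simp: ds_mats_def)

lemma ds_mats_entry_eq_1_if_row_support_singleton:
  assumes "X \<in> ds_mats" and "row_support X i = {j}"
  shows "X$i$j = 1"
  using assms sum_row_eq_sum_row_support[of X i] by (simp add: ds_mats_def)

lemma ds_mats_column_zero_if_entry_eq_1:
  assumes X: "X \<in> ds_mats" and "X$i$j = 1" and "k \<noteq> i"
  shows "X$k$j = 0"
proof -
  have "1 = (\<Sum>a\<in>UNIV. X$a$j)"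
    using X by (simp add: ds_mats_def)
  also have "\<dots> = X$i$j + (\<Sum>a\<in>UNIV - {i}. X$a$j)"
    by (simp add: sum.remove)
  finally have "1 = X$i$j + (\<Sum>a\<in>UNIV - {i}. X$a$j)" .
  then have "(\<Sum>a\<in>UNIV - {i}. X$a$j) = 0"
    using \<open>X$i$j = 1\<close> by simp
  moreover have "\<forall>a. X$a$j \<ge> 0"
    using X by (simp add: ds_mats_def)
  ultimately show ?thesis
    using \<open>k \<noteq> i\<close> by (simp add: sum_nonneg_eq_0_iff)
qed

lemma ds_mats_in_perm_mats_if_row_supports_singleton:
  assumes X: "X \<in> ds_mats" and single: "\<forall>i. card (row_support X i) = 1"
  shows "X \<in> perm_mats"
proof -
  have "X$i$j \<in> {0, 1}" for i j
  proof (cases "j \<in> row_support X i")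
    case True
    with single[rule_format, of i] have "row_support X i = {j}"
      by (auto simp: card_1_singleton_iff)
    then show ?thesis
      using ds_mats_entry_eq_1_if_row_support_singleton[OF X] by simp
  qed (simp add: row_support_def)
  then show ?thesis
    using X by (simp add: ds_mats_def perm_mats_def)
qed

lemma ds_mats_row_support_singleton_if_others:
  assumes X: "X \<in> ds_mats" and others: "\<forall>i. i \<noteq> k \<longrightarrow> card (row_support X i) = 1"
  shows "card (row_support X k) = 1"
proof -
  define c where "c i = (THE j. row_support X i = {j})" for i
  have support_c: "row_support X i = {c i}" if "i \<noteq> k" for i
  proof -
    have "card (row_support X i) = 1"
      using others that by blast
    then obtain j where "row_support X i = {j}"
      by (rule card_1_singletonE)
    then show ?thesis
      by (simp add: c_def)
  qed
  have entry_c: "X$i$(c i) = 1" if "i \<noteq> k" for i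
    using ds_mats_entry_eq_1_if_row_support_singleton[OF X support_c[OF that]] .
  have column_c: "X$k$(c i) = 0" if "i \<noteq> k" for i
    using ds_mats_column_zero_if_entry_eq_1[OF X entry_c[OF that]] that by simp
  have "inj_on c (UNIV - {k})"
  proof (rule inj_onI)
    fix a b
    assume "a \<in> UNIV - {k}" "b \<in> UNIV - {k}" "c a = c b"
    then show "a = b"
      using ds_mats_column_zero_if_entry_eq_1[OF X entry_c] entry_c by fastforce
  qed
  then have "card (UNIV - c ` (UNIV - {k})) = 1"
    by (simp add: card_Diff_subset card_image card_Diff_singleton)
  moreover have "row_support X k \<subseteq> UNIV - c ` (UNIV - {k})"
    using column_c by (auto simp: row_support_def)
  ultimately have "card (row_support X k) \<le> 1"
    using card_mono[of "UNIV - c ` (UNIV - {k})" "row_support X k"] by simp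
  moreover have "card (row_support X k) \<noteq> 0"
    using ds_mats_row_support_nonempty[OF X] by simp
  ultimately show ?thesis
    by linarith
qed

lemma ds_mats_two_rows_with_spread_support:
  assumes X: "X \<in> ds_mats" and "X \<notin> perm_mats"
  shows "card {i. card (row_support X i) \<noteq> 1} \<ge> 2"
proof -
  let ?M = "{i. card (row_support X i) \<noteq> 1}"
  obtain a where "a \<in> ?M"
    using assms ds_mats_in_perm_mats_if_row_supports_singleton by blast
  moreover obtain b where "b \<in> ?M" "b \<noteq> a"
    using ds_mats_row_support_singleton_if_others[OF X, of a] \<open>a \<in> ?M\<close> by auto
  ultimately have "card {a, b} \<le> card ?M"
    by (intro card_mono) auto
  then show ?thesis
    using \<open>b \<noteq> a\<close> by simp
qed

lemma l0norm_ds_mats_not_perm_mats: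
  fixes X :: "real^'n^'n"
  assumes X: "X \<in> ds_mats" and "X \<notin> perm_mats"
  shows "l0norm X \<ge> CARD('n) + 2"
proof -
  let ?M = "{i. card (row_support X i) \<noteq> 1}"
  have card_ge_1: "card (row_support X i) \<ge> 1" for i
    using ds_mats_row_support_nonempty[OF X] by (simp add: Suc_le_eq card_gt_0_iff)
  have "CARD('n) + card ?M = (\<Sum>i\<in>UNIV. 1 + (if i \<in> ?M then 1 else 0))"
    by (subst sum.distrib) (simp add: sum.If_cases)
  also have "\<dots> \<le> (\<Sum>i\<in>UNIV. card (row_support X i))"
    using card_ge_1 by (intro sum_mono) (simp add: le_neq_implies_less Suc_le_eq)
  finally show ?thesis
    using ds_mats_two_rows_with_spread_support[OF assms]
    by (simp add: l0norm_eq_sum_card_row_support)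
qed

lemma exact_penalty_minimiser_in_perm_mats:
  fixes f :: "real^'n^'n \<Rightarrow> real"
  assumes lower: "\<And>Y. Y \<in> ds_mats \<Longrightarrow> m \<le> f Y"
    and sig: "\<sigma> > (Min (f ` perm_mats) - m) / 2"
    and Xs_in: "Xs \<in> ds_mats"
    and Xs_min: "\<forall>Y\<in>ds_mats. f Xs + \<sigma> * l0norm Xs \<le> f Y + \<sigma> * l0norm Y"
  shows "Xs \<in> perm_mats"
proof (rule ccontr)
  assume "Xs \<notin> perm_mats"
  have "Min (f ` perm_mats) \<in> f ` perm_mats"
    using finite_perm_mats mat_1_in_perm_mats by (intro Min_in) auto
  then obtain P where P: "P \<in> perm_mats" "f P = Min (f ` perm_mats)"
    by auto
  then have "P \<in> ds_mats"
    using perm_mats_subset_ds_mats by blast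
  then have "\<sigma> > 0"
    using sig lower P(2) by fastforce
  with \<open>Xs \<notin> perm_mats\<close> have "\<sigma> * (CARD('n) + 2) \<le> \<sigma> * l0norm Xs"
    using l0norm_ds_mats_not_perm_mats[OF Xs_in] by simp
  moreover have "f Xs + \<sigma> * l0norm Xs \<le> f P + \<sigma> * CARD('n)"
    using Xs_min \<open>P \<in> ds_mats\<close> l0norm_perm_mats[OF P(1)] by fastforce
  ultimately have "2 * \<sigma> \<le> f P - f Xs"
    by (simp add: algebra_simps)
  with sig P(2) lower[OF Xs_in] show False
    by simp
qed

theorem lemma3p1:
  fixes f :: "real^'n^'n \<Rightarrow> real" and \<sigma> :: real and Xs :: "real^'n^'n"
  assumes diff: "\<forall>X. f differentiable (at X)"
    and sig: "\<sigma> > (Min (f ` perm_mats) - Inf (f ` ds_mats)) / 2"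
    and Xs_in: "Xs \<in> ds_mats"
    and Xs_min: "\<forall>Y\<in>ds_mats. f Xs + \<sigma> * real (l0norm Xs) \<le> f Y + \<sigma> * real (l0norm Y)"
  shows "Xs \<in> perm_mats \<and> (\<forall>Y\<in>perm_mats. f Xs \<le> f Y)"
proof -
  \<comment> \<open>Differentiability only serves to make \<open>f\<close> bounded below on the compact set
    \<open>ds_mats\<close>, so that \<open>Inf\<close> is the true infimum rather than an unspecified value.\<close>
  have "continuous_on ds_mats f"
    using diff differentiable_imp_continuous_within continuous_at_imp_continuous_on by blast
  then have "bdd_below (f ` ds_mats)"
    by (meson bounded_imp_bdd_below compact_continuous_image compact_ds_mats compact_imp_bounded)
  then have "Inf (f ` ds_mats) \<le> f Y" if "Y \<in> ds_mats" for Y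
    using that by (simp add: cInf_lower)
  then have Xs_perm: "Xs \<in> perm_mats"
    using exact_penalty_minimiser_in_perm_mats sig Xs_in Xs_min by blast
  have "f Xs \<le> f Y" if "Y \<in> perm_mats" for Y
    using Xs_min that perm_mats_subset_ds_mats l0norm_perm_mats[OF that] l0norm_perm_mats[OF Xs_perm]
    by fastforce
  with Xs_perm show ?thesis
    by blast
qed

end
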